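(* Let $n\ge2$, let $u$ be a polar $n$-complex number, and define $\cos u=\sum_{j\ge0}(-1)^ju^{2j}/(2j)!$ and $\sin u=\sum_{j\ge0}(-1)^ju^{2j+1}/(2j+1)!$. Then for even $n$ $$\cos u=e_+\cos v_++e_-\cos v_-+\sum_{k=1}^{n/2-1}\big(e_k\cos v_k\cosh\tilde v_k-\tilde e_k\sin v_k\sinh\tilde v_k\big),$$ $$\sin u=e_+\sin v_++e_-\sin v_-+\sum_{k=1}^{n/2-1}\big(e_k\sin v_k\cosh\tilde v_k+\tilde e_k\cos v_k\sinh\tilde v_k\big),$$ and for odd $n$ the same formulas hold with the $e_-$ terms omitted and the sums running over $k=1,\dots,(n-1)/2$.
   Context: Polar $n$-complex numbers: $u=x_0+h_1x_1+\cdots+h_{n-1}x_{n-1}$, $x_j\in\mathbb{R}$, $h_0=1$, componentwise addition, bilinear multiplication $h_jh_k=h_{(j+k)\bmod n}$. Canonical variables: $v_+=\sum_px_p$; for even $n$, $v_-=\sum_p(-1)^px_p$; $v_k=\sum_px_p\cos(2\pi kp/n)$, $\tilde v_k=\sum_px_p\sin(2\pi kp/n)$ for $k=1,\dots,\lfloor(n-1)/2\rfloor$. Canonical base: $e_+=\frac1n\sum_ph_p$, $e_-=\frac1n\sum_p(-1)^ph_p$ (even $n$), $e_k=\frac2n\sum_p\cos(2\pi kp/n)h_p$, $\tilde e_k=\frac2n\sum_p\sin(2\pi kp/n)h_p$. *)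

theory Defs
  imports Complex_Main
begin

text \<open>A polar n-complex number u = x_0 + h_1 x_1 + ... + h_(n-1) x_(n-1) is represented by
  its coordinate function x :: nat => real; only the coordinates x p with p < n are meaningful.\<close>

type_synonym pncomplex = "nat \<Rightarrow> real"

definition padd :: "pncomplex \<Rightarrow> pncomplex \<Rightarrow> pncomplex" where
  "padd u w = (\<lambda>p. u p + w p)"

definition pscale :: "real \<Rightarrow> pncomplex \<Rightarrow> pncomplex" where
  "pscale c u = (\<lambda>p. c * u p)"

definition pmul :: "nat \<Rightarrow> pncomplex \<Rightarrow> pncomplex \<Rightarrow> pncomplex" where
  "pmul n u w = (\<lambda>m. \<Sum>j<n. \<Sum>k<n. if (j + k) mod n = m then u j * w k else 0)"

definition punit :: "pncomplex" where
  "punit = (\<lambda>p. if p = 0 then 1 else 0)"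

definition ppow :: "nat \<Rightarrow> pncomplex \<Rightarrow> nat \<Rightarrow> pncomplex" where
  "ppow n u k = (pmul n u ^^ k) punit"

definition vplus :: "nat \<Rightarrow> pncomplex \<Rightarrow> real" where
  "vplus n x = (\<Sum>p<n. x p)"
definition vminus :: "nat \<Rightarrow> pncomplex \<Rightarrow> real" where
  "vminus n x = (\<Sum>p<n. (-1) ^ p * x p)"
definition vk :: "nat \<Rightarrow> pncomplex \<Rightarrow> nat \<Rightarrow> real" where
  "vk n x k = (\<Sum>p<n. x p * cos (2 * pi * real k * real p / real n))"
definition vtk :: "nat \<Rightarrow> pncomplex \<Rightarrow> nat \<Rightarrow> real" where
  "vtk n x k = (\<Sum>p<n. x p * sin (2 * pi * real k * real p / real n))"

definition eplus :: "nat \<Rightarrow> pncomplex" where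
  "eplus n = (\<lambda>p. 1 / real n)"
definition eminus :: "nat \<Rightarrow> pncomplex" where
  "eminus n = (\<lambda>p. (-1) ^ p / real n)"
definition ek :: "nat \<Rightarrow> nat \<Rightarrow> pncomplex" where
  "ek n k = (\<lambda>p. 2 / real n * cos (2 * pi * real k * real p / real n))"
definition etk :: "nat \<Rightarrow> nat \<Rightarrow> pncomplex" where
  "etk n k = (\<lambda>p. 2 / real n * sin (2 * pi * real k * real p / real n))"

definition pcos_sums :: "nat \<Rightarrow> pncomplex \<Rightarrow> pncomplex \<Rightarrow> bool" where
  "pcos_sums n u s = (\<forall>p<n. (\<lambda>j. (-1) ^ j * ppow n u (2 * j) p / fact (2 * j)) sums s p)"
definition psin_sums :: "nat \<Rightarrow> pncomplex \<Rightarrow> pncomplex \<Rightarrow> bool" where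
  "psin_sums n u s = (\<forall>p<n. (\<lambda>j. (-1) ^ j * ppow n u (2 * j + 1) p / fact (2 * j + 1)) sums s p)"

definition psum :: "(nat \<Rightarrow> pncomplex) \<Rightarrow> nat set \<Rightarrow> pncomplex" where
  "psum f A = (\<lambda>p. \<Sum>k\<in>A. f k p)"

end

theory Submission
  imports Defs "HOL-Analysis.Complex_Transcendental"
begin

(* The discrete Fourier transform X k = (SUM p<n. x p * w^(k p)), w = exp (2 pi i / n), turns the
   product of polar n-complex numbers into the componentwise product of complex numbers and is
   inverted by x p = (1/n) (SUM k<n. X k * w^(-k p)). Hence, for a power series f with real
   coefficients, the p-th coordinate of f u is (1/n) (SUM k<n. Re (w^(-k p) * f (v_k + i v~_k))).
   The transform at n - k is the conjugate of the one at k and f commutes with conjugation, so the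
   terms k and n - k are equal: k = 0 and k = n/2 give the e_+ and e_- components and the pairs
   give the e_k and e~_k components, where for f = cos, sin the real and imaginary parts of
   f (v_k + i v~_k) produce the cosh and sinh factors. *)

definition unit_root :: "nat \<Rightarrow> complex" where
  "unit_root n = cis (2 * pi / real n)"

lemma unit_root_power: "unit_root n ^ m = cis (2 * pi * real m / real n)"
  unfolding unit_root_def Complex.DeMoivre by (simp add: mult_ac)

lemma unit_root_power_n: "0 < n \<Longrightarrow> unit_root n ^ n = 1"
  by (simp add: unit_root_power)

lemma unit_root_power_mod:
  assumes "0 < n"
  shows "unit_root n ^ (m mod n) = unit_root n ^ m"
proof -
  have "unit_root n ^ m = (unit_root n ^ n) ^ (m div n) * unit_root n ^ (m mod n)"
    by (simp add: power_mult[symmetric] power_add[symmetric])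
  then show ?thesis using assms by (simp add: unit_root_power_n)
qed

lemma cnj_unit_root_power:
  assumes "m \<le> n"
  shows "cnj (unit_root n ^ m) = unit_root n ^ (n - m)"
proof (cases "n = 0")
  case False
  then have "2 * pi * real (n - m) / real n = 2 * pi + - (2 * pi * real m / real n)"
    using assms by (simp add: of_nat_diff field_simps)
  then show ?thesis
    by (simp only: unit_root_power cis_cnj cis_mult[symmetric] cis_2pi mult_1)
qed (use assms in simp)

lemma unit_root_power_eq_1_iff:
  assumes n: "0 < n"
  shows "unit_root n ^ d = 1 \<longleftrightarrow> n dvd d"
proof
  assume "unit_root n ^ d = 1"
  then have "unit_root n ^ (d mod n) = unit_root n ^ 0"
    using n by (simp only: unit_root_power_mod power_0)
  then have "cis (2 * pi * real (d mod n) / real n) = cis (2 * pi * real 0 / real n)"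
    by (simp only: unit_root_power)
  then have "d mod n = 0"
    using n by (intro inj_onD[OF bij_betw_imp_inj_on[OF Complex.bij_betw_roots_unity[OF n]]]) auto
  then show "n dvd d" by (simp add: dvd_eq_mod_eq_0)
next
  assume "n dvd d"
  then obtain c where "d = n * c" ..
  then show "unit_root n ^ d = 1"
    using n by (simp add: power_mult unit_root_power_n)
qed

lemma sum_unit_root_powers:
  assumes n: "0 < n"
  shows "(\<Sum>k<n. (unit_root n ^ d) ^ k) = (if n dvd d then of_nat n else 0)"
proof (cases "n dvd d")
  case False
  then have "unit_root n ^ d \<noteq> 1" using n by (simp add: unit_root_power_eq_1_iff)
  moreover have "(unit_root n ^ d) ^ n = (unit_root n ^ n) ^ d"
    by (simp only: power_mult[symmetric] mult.commute)
  ultimately show ?thesis using False n by (simp add: geometric_sum unit_root_power_n)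
next
  case True
  then have "unit_root n ^ d = 1" using n by (simp add: unit_root_power_eq_1_iff)
  with True show ?thesis by simp
qed

lemma unit_root_power_reflect:
  assumes "k \<le> n"
  shows "unit_root n ^ ((n - k) * p) = cnj (unit_root n ^ (k * p))"
  by (simp only: power_mult cnj_unit_root_power[OF assms, symmetric] complex_cnj_power)

lemma unit_root_power_half:
  assumes "even n" and "0 < n"
  shows "unit_root n ^ (n div 2 * p) = (-1) ^ p"
proof -
  have "2 * pi * real (n div 2 * p) / real n = real p * pi"
    using assms by (auto elim!: evenE simp: field_simps)
  then show ?thesis by (simp add: unit_root_power Complex.DeMoivre[symmetric])
qed

definition dft :: "nat \<Rightarrow> pncomplex \<Rightarrow> nat \<Rightarrow> complex" where
  "dft n x k = (\<Sum>p<n. of_real (x p) * unit_root n ^ (k * p))"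

lemma Re_dft: "Re (dft n x k) = vk n x k"
  by (simp add: dft_def vk_def Re_sum unit_root_power mult_ac)

lemma Im_dft: "Im (dft n x k) = vtk n x k"
  by (simp add: dft_def vtk_def Im_sum unit_root_power mult_ac)

lemma dft_0: "dft n x 0 = of_real (vplus n x)"
  by (simp add: dft_def vplus_def)

lemma dft_half:
  assumes "even n" and "0 < n"
  shows "dft n x (n div 2) = of_real (vminus n x)"
  unfolding dft_def vminus_def unit_root_power_half[OF assms] by (simp add: mult.commute)

lemma dft_reflect:
  assumes "k \<le> n"
  shows "dft n x (n - k) = cnj (dft n x k)"
  using assms by (simp add: dft_def unit_root_power_reflect del: complex_cnj_power)

lemma dft_pmul:
  assumes n: "0 < n"
  shows "dft n (pmul n u w) k = dft n u k * dft n w k"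
proof -
  have shift: "unit_root n ^ (k * ((j + l) mod n)) = unit_root n ^ (k * j) * unit_root n ^ (k * l)"
    for j l
  proof -
    have "unit_root n ^ (k * ((j + l) mod n)) = (unit_root n ^ ((j + l) mod n)) ^ k"
      unfolding power_mult[symmetric] by (simp only: mult.commute)
    also have "\<dots> = unit_root n ^ (k * j) * unit_root n ^ (k * l)"
      unfolding unit_root_power_mod[OF n] power_add power_mult_distrib power_mult[symmetric]
      by (simp only: mult.commute)
    finally show ?thesis .
  qed
  have "dft n (pmul n u w) k = (\<Sum>m<n. \<Sum>j<n. \<Sum>l<n.
      if (j + l) mod n = m then of_real (u j * w l) * unit_root n ^ (k * m) else 0)"
    unfolding dft_def pmul_def of_real_sum sum_distrib_right by (intro sum.cong refl) auto
  also have "\<dots> = (\<Sum>j<n. \<Sum>l<n. \<Sum>m<n.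
      if (j + l) mod n = m then of_real (u j * w l) * unit_root n ^ (k * m) else 0)"
    by (subst sum.swap, rule sum.cong[OF refl], rule sum.swap)
  also have "\<dots> = (\<Sum>j<n. \<Sum>l<n. of_real (u j * w l) * unit_root n ^ (k * ((j + l) mod n)))"
    using n by (simp add: sum.delta')
  also have "\<dots> = dft n u k * dft n w k"
    by (simp add: dft_def shift sum_product mult_ac)
  finally show ?thesis .
qed

lemma dft_punit:
  assumes "0 < n"
  shows "dft n punit k = 1"
proof -
  have "dft n punit k = (\<Sum>p<n. if p = 0 then unit_root n ^ (k * p) else 0)"
    unfolding dft_def punit_def by (intro sum.cong) auto
  then show ?thesis using assms by simp
qed

lemma dft_ppow: "0 < n \<Longrightarrow> dft n (ppow n u m) k = dft n u k ^ m"
  by (induction m) (simp_all add: ppow_def dft_punit dft_pmul)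

lemma dvd_add_diff_iff_eq:
  fixes n p q :: nat
  assumes "p < n" "q < n"
  shows "n dvd q + (n - p) \<longleftrightarrow> q = p"
proof (cases "p \<le> q")
  case True
  then have "q + (n - p) = (q - p) + n" using assms by simp
  then have "n dvd q + (n - p) \<longleftrightarrow> n dvd q - p" by simp
  also have "\<dots> \<longleftrightarrow> q - p = 0" using assms by (auto dest: dvd_imp_le)
  finally show ?thesis using True by simp
next
  case False
  then show ?thesis using assms by (auto dest: dvd_imp_le)
qed

lemma unit_root_orthogonality:
  assumes n: "0 < n" and "p < n" "q < n"
  shows "(\<Sum>k<n. unit_root n ^ (k * q) * cnj (unit_root n ^ (k * p)))
    = (if q = p then of_nat n else 0)"
proof -
  have "unit_root n ^ (k * q) * cnj (unit_root n ^ (k * p)) = (unit_root n ^ (q + (n - p))) ^ k" for k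
  proof -
    have "unit_root n ^ (k * q) * cnj (unit_root n ^ (k * p))
        = (unit_root n ^ q) ^ k * cnj (unit_root n ^ p) ^ k"
      by (simp only: mult.commute[of k] power_mult complex_cnj_power[of "unit_root n ^ p"])
    also have "\<dots> = (unit_root n ^ (q + (n - p))) ^ k"
      using assms by (simp only: cnj_unit_root_power less_imp_le power_add power_mult_distrib)
    finally show ?thesis .
  qed
  then have "(\<Sum>k<n. unit_root n ^ (k * q) * cnj (unit_root n ^ (k * p)))
      = (\<Sum>k<n. (unit_root n ^ (q + (n - p))) ^ k)"
    by (rule sum.cong[OF refl])
  also have "\<dots> = (if q = p then of_nat n else 0)"
    by (simp only: sum_unit_root_powers[OF n] dvd_add_diff_iff_eq[OF assms(2,3)])
  finally show ?thesis .
qed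

lemma dft_inversion:
  assumes n: "0 < n" and p: "p < n"
  shows "(\<Sum>k<n. dft n x k * cnj (unit_root n ^ (k * p))) = of_nat n * of_real (x p)"
proof -
  have "(\<Sum>k<n. dft n x k * cnj (unit_root n ^ (k * p)))
      = (\<Sum>q<n. of_real (x q) * (\<Sum>k<n. unit_root n ^ (k * q) * cnj (unit_root n ^ (k * p))))"
    unfolding dft_def sum_distrib_right sum_distrib_left by (subst sum.swap) (simp add: mult_ac)
  also have "\<dots> = (\<Sum>q<n. if q = p then of_nat n * of_real (x q) else 0)"
    using assms by (intro sum.cong) (simp_all add: unit_root_orthogonality del: complex_cnj_power)
  finally show ?thesis using p by simp
qed

lemma sum_lessThan_reflect:
  fixes g :: "nat \<Rightarrow> 'a::comm_semiring_1"
  assumes n: "0 < n" and reflect: "\<And>k. 0 < k \<Longrightarrow> k < n \<Longrightarrow> g (n - k) = g k"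
  shows "(\<Sum>k<n. g k)
    = g 0 + (if even n then g (n div 2) else 0) + 2 * (\<Sum>k\<in>{1..(n - 1) div 2}. g k)"
proof -
  define h where "h = (n - 1) div 2"
  have bounds:
    "(0::nat) \<le> 1" "1 \<le> n" "1 \<le> h + 1" "h + 1 \<le> n" "h + 1 \<le> n - h" "n - h \<le> n"
    using n by (auto simp: h_def)
  have "(\<Sum>k<n. g k) = (\<Sum>k\<in>{0..<1}. g k) + ((\<Sum>k\<in>{1..<h + 1}. g k)
      + ((\<Sum>k\<in>{h + 1..<n - h}. g k) + (\<Sum>k\<in>{n - h..<n}. g k)))"
    unfolding lessThan_atLeast0 using bounds by (simp only: sum.atLeastLessThan_concat)
  also have "(\<Sum>k\<in>{n - h..<n}. g k) = (\<Sum>k\<in>{1..h}. g k)"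
    by (rule sum.reindex_bij_witness[of _ "\<lambda>k. n - k" "\<lambda>k. n - k"])
       (use n in \<open>auto simp: h_def intro: reflect\<close>)
  also have "(\<Sum>k\<in>{h + 1..<n - h}. g k) = (if even n then g (n div 2) else 0)"
  proof (cases "even n")
    case True
    then have "{h + 1..<n - h} = {n div 2}" using n by (auto simp: h_def elim!: evenE)
    then show ?thesis using True by simp
  next
    case False
    then have "{h + 1..<n - h} = {}" by (auto simp: h_def elim!: oddE)
    then show ?thesis using False by simp
  qed
  finally show ?thesis by (simp add: h_def atLeastLessThanSuc_atLeastAtMost mult_2 add_ac)
qed

lemma ppow_dft_expansion:
  assumes "0 < n" and "p < n"
  shows "of_real (ppow n u m p) = (\<Sum>k<n. dft n u k ^ m * cnj (unit_root n ^ (k * p))) / of_nat n"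
proof -
  have "(\<Sum>k<n. dft n u k ^ m * cnj (unit_root n ^ (k * p))) = of_nat n * of_real (ppow n u m p)"
    using dft_inversion[OF assms, of "ppow n u m"] by (simp only: dft_ppow[OF assms(1)])
  then show ?thesis
    using assms(1) by simp
qed

lemma real_coeffs_series_cnj:
  assumes f: "\<And>z. (\<lambda>j. of_real (c j) * z ^ e j) sums f z"
  shows "f (cnj z) = cnj (f z)"
proof -
  have "(\<lambda>j. cnj (of_real (c j) * z ^ e j)) sums cnj (f z)"
    by (rule sums_cnj[THEN iffD2, OF f])
  then have "(\<lambda>j. of_real (c j) * cnj z ^ e j) sums cnj (f z)"
    by simp
  with f[of "cnj z"] show ?thesis
    by (rule sums_unique2)
qed

lemma ppow_series_sums:
  fixes c :: "nat \<Rightarrow> real" and e :: "nat \<Rightarrow> nat"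
  assumes f: "\<And>z. (\<lambda>j. of_real (c j) * z ^ e j) sums f z" and n: "0 < n" and p: "p < n"
  shows "(\<lambda>j. c j * ppow n u (e j) p) sums
    ((\<Sum>k<n. Re (f (dft n u k) * cnj (unit_root n ^ (k * p)))) / real n)"
proof -
  have "(\<lambda>j. (\<Sum>k<n. of_real (c j) * dft n u k ^ e j * cnj (unit_root n ^ (k * p))) / of_nat n)
      sums ((\<Sum>k<n. f (dft n u k) * cnj (unit_root n ^ (k * p))) / of_nat n)"
    by (intro sums_divide sums_sum sums_mult2 f)
  moreover have "(\<Sum>k<n. of_real (c j) * dft n u k ^ e j * cnj (unit_root n ^ (k * p))) / of_nat n
      = of_real (c j * ppow n u (e j) p)" for j
    by (simp add: ppow_dft_expansion[OF n p] sum_distrib_left mult.assoc del: complex_cnj_power)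
  ultimately have "(\<lambda>j. of_real (c j * ppow n u (e j) p)) sums
      ((\<Sum>k<n. f (dft n u k) * cnj (unit_root n ^ (k * p))) / of_nat n)"
    by simp
  from sums_Re[OF this] show ?thesis
    by (simp add: Re_sum del: complex_cnj_power)
qed

lemma Re_mult_cnj_cis: "Re (w * cnj (cis t)) = cos t * Re w + sin t * Im w"
  by (simp add: cis_cnj)

theorem ppow_series_sums_canonical:
  fixes c :: "nat \<Rightarrow> real" and e :: "nat \<Rightarrow> nat"
  assumes f: "\<And>z. (\<lambda>j. of_real (c j) * z ^ e j) sums f z" and n: "0 < n" and p: "p < n"
  shows "(\<lambda>j. c j * ppow n u (e j) p) sums
    ((Re (f (of_real (vplus n u)))
      + (if even n then (-1) ^ p * Re (f (of_real (vminus n u))) else 0)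
      + 2 * (\<Sum>k\<in>{1..(n - 1) div 2}. cos (2 * pi * real k * real p / real n) * Re (f (dft n u k))
                                    + sin (2 * pi * real k * real p / real n) * Im (f (dft n u k))))
     / real n)"
proof -
  define g where "g k = Re (f (dft n u k) * cnj (unit_root n ^ (k * p)))" for k
  have "g (n - k) = g k" if "k < n" for k
  proof -
    have "f (dft n u (n - k)) * cnj (unit_root n ^ ((n - k) * p))
        = cnj (f (dft n u k) * cnj (unit_root n ^ (k * p)))"
      using that by (simp only: dft_reflect unit_root_power_reflect real_coeffs_series_cnj[OF f]
          less_imp_le complex_cnj_mult)
    then show ?thesis by (simp only: g_def complex_cnj_cnj cnj.sel(1))
  qed
  then have "(\<Sum>k<n. g k)
      = g 0 + (if even n then g (n div 2) else 0) + 2 * (\<Sum>k\<in>{1..(n - 1) div 2}. g k)"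
    using n by (intro sum_lessThan_reflect) auto
  also have "g 0 = Re (f (of_real (vplus n u)))"
    by (simp add: g_def dft_0)
  also have "(if even n then g (n div 2) else 0)
      = (if even n then (-1) ^ p * Re (f (of_real (vminus n u))) else 0)"
    using n by (simp add: g_def dft_half unit_root_power_half)
  also have "(\<Sum>k\<in>{1..(n - 1) div 2}. g k) = (\<Sum>k\<in>{1..(n - 1) div 2}.
      cos (2 * pi * real k * real p / real n) * Re (f (dft n u k))
      + sin (2 * pi * real k * real p / real n) * Im (f (dft n u k)))"
    by (simp add: g_def unit_root_power Re_mult_cnj_cis mult_ac del: complex_cnj_power)
  finally show ?thesis
    using ppow_series_sums[OF f n p, of u] by (simp add: g_def)
qed

lemma cos_paired_complex:
  "(\<lambda>j. of_real ((-1) ^ j / fact (2 * j)) * z ^ (2 * j)) sums cos (z::complex)"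
proof -
  have "(\<lambda>j. \<Sum>i = j * 2..<j * 2 + 2. of_real (cos_coeff i) * z ^ i) sums cos z"
    by (rule sums_group) (use cos_converges[of z, unfolded scaleR_conv_of_real] in auto)
  then show ?thesis
    by (simp add: cos_coeff_def ac_simps)
qed

lemma sin_paired_complex:
  "(\<lambda>j. of_real ((-1) ^ j / fact (2 * j + 1)) * z ^ (2 * j + 1)) sums sin (z::complex)"
proof -
  have "(\<lambda>j. \<Sum>i = j * 2..<j * 2 + 2. of_real (sin_coeff i) * z ^ i) sums sin z"
    by (rule sums_group) (use sin_converges[of z, unfolded scaleR_conv_of_real] in auto)
  then show ?thesis
    by (simp add: sin_coeff_def ac_simps)
qed

lemma Re_cos_cosh: "Re (cos z) = cos (Re z) * cosh (Im z)"
  and Im_cos_sinh: "Im (cos z) = - (sin (Re z) * sinh (Im z))"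
  and Re_sin_cosh: "Re (sin z) = sin (Re z) * cosh (Im z)"
  and Im_sin_sinh: "Im (sin z) = cos (Re z) * sinh (Im z)"
  by (simp_all add: Re_cos Im_cos Re_sin Im_sin cosh_def sinh_def field_simps)

lemma pcos_sums_canonical:
  assumes n: "0 < n"
    and s: "\<And>p. p < n \<Longrightarrow> s p =
      (cos (vplus n u) + (if even n then (-1) ^ p * cos (vminus n u) else 0)
        + 2 * (\<Sum>k\<in>{1..(n - 1) div 2}.
                 cos (2 * pi * real k * real p / real n) * (cos (vk n u k) * cosh (vtk n u k))
                 + sin (2 * pi * real k * real p / real n) * - (sin (vk n u k) * sinh (vtk n u k))))
       / real n"
  shows "pcos_sums n u s"
  unfolding pcos_sums_def
proof (intro allI impI)
  fix p assume p: "p < n"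
  from ppow_series_sums_canonical[OF cos_paired_complex n p, of u]
  show "(\<lambda>j. (-1) ^ j * ppow n u (2 * j) p / fact (2 * j)) sums s p"
    by (simp add: s[OF p] Re_cos_cosh Im_cos_sinh Re_dft Im_dft cong: if_cong)
qed

lemma psin_sums_canonical:
  assumes n: "0 < n"
    and s: "\<And>p. p < n \<Longrightarrow> s p =
      (sin (vplus n u) + (if even n then (-1) ^ p * sin (vminus n u) else 0)
        + 2 * (\<Sum>k\<in>{1..(n - 1) div 2}.
                 cos (2 * pi * real k * real p / real n) * (sin (vk n u k) * cosh (vtk n u k))
                 + sin (2 * pi * real k * real p / real n) * (cos (vk n u k) * sinh (vtk n u k))))
       / real n"
  shows "psin_sums n u s"
  unfolding psin_sums_def
proof (intro allI impI)
  fix p assume p: "p < n"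
  from ppow_series_sums_canonical[OF sin_paired_complex n p, of u]
  show "(\<lambda>j. (-1) ^ j * ppow n u (2 * j + 1) p / fact (2 * j + 1)) sums s p"
    by (simp add: s[OF p] Re_sin_cosh Im_sin_sinh Re_dft Im_dft cong: if_cong)
qed

lemma canonical_base_expansion:
  "padd (pscale a (eplus n)) (psum (\<lambda>k. padd (pscale (A k) (ek n k)) (pscale (B k) (etk n k))) K) p
    = (a + 2 * (\<Sum>k\<in>K. cos (2 * pi * real k * real p / real n) * A k
                         + sin (2 * pi * real k * real p / real n) * B k)) / real n"
  and canonical_base_expansion_even:
  "padd (pscale a (eplus n)) (padd (pscale b (eminus n))
      (psum (\<lambda>k. padd (pscale (A k) (ek n k)) (pscale (B k) (etk n k))) K)) p
    = (a + (-1) ^ p * b + 2 * (\<Sum>k\<in>K. cos (2 * pi * real k * real p / real n) * A k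
                         + sin (2 * pi * real k * real p / real n) * B k)) / real n"
  by (simp_all add: padd_def pscale_def psum_def eplus_def eminus_def ek_def etk_def
      sum_distrib_left sum_divide_distrib add_divide_distrib distrib_left mult_ac)

theorem mainTheorem13:
  fixes n :: nat and u :: pncomplex
  assumes "n \<ge> 2"
  shows "(even n \<longrightarrow>
      pcos_sums n u
        (padd (pscale (cos (vplus n u)) (eplus n))
          (padd (pscale (cos (vminus n u)) (eminus n))
            (psum (\<lambda>k. padd (pscale (cos (vk n u k) * cosh (vtk n u k)) (ek n k))
                             (pscale (- (sin (vk n u k) * sinh (vtk n u k))) (etk n k)))
                  {1..n div 2 - 1})))
    \<and> psin_sums n u
        (padd (pscale (sin (vplus n u)) (eplus n))
          (padd (pscale (sin (vminus n u)) (eminus n))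
            (psum (\<lambda>k. padd (pscale (sin (vk n u k) * cosh (vtk n u k)) (ek n k))
                             (pscale (cos (vk n u k) * sinh (vtk n u k)) (etk n k)))
                  {1..n div 2 - 1}))))
    \<and> (odd n \<longrightarrow>
      pcos_sums n u
        (padd (pscale (cos (vplus n u)) (eplus n))
            (psum (\<lambda>k. padd (pscale (cos (vk n u k) * cosh (vtk n u k)) (ek n k))
                             (pscale (- (sin (vk n u k) * sinh (vtk n u k))) (etk n k)))
                  {1..(n - 1) div 2}))
    \<and> psin_sums n u
        (padd (pscale (sin (vplus n u)) (eplus n))
            (psum (\<lambda>k. padd (pscale (sin (vk n u k) * cosh (vtk n u k)) (ek n k))
                             (pscale (cos (vk n u k) * sinh (vtk n u k)) (etk n k)))
                  {1..(n - 1) div 2})))"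
proof -
  have n: "0 < n" using assms by simp
  have half: "(n - Suc 0) div 2 = n div 2 - Suc 0" if "even n" using that by (auto elim: evenE)
  show ?thesis
    by (intro conjI impI pcos_sums_canonical[OF n] psin_sums_canonical[OF n])
       (simp_all add: canonical_base_expansion canonical_base_expansion_even half)
qed

end
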